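(* Let $\mathcal{M}=(E,\rho)$ be a $q$-matroid, $E_1=\mathrm{cl}(0)$, and $E_2\le E$ with $E=E_1\oplus E_2$. Let $\mathcal{M}_i=\mathcal{M}|_{E_i}=(E_i,\rho_i)$ and $\pi_i:E\to E_i$ the projections. Then (a) $\mathcal{M}_1$ is the trivial $q$-matroid on $E_1$; (b) $\rho(V)=\rho_2(\pi_2(V))$ for all $V\le E$; (c) $\mathcal{M}=\mathcal{M}_1\oplus\mathcal{M}_2$. Moreover, $\mathrm{cl}(0)$ consists of all vectors $x\in E$ with $\rho(\langle x\rangle)=0$.
   Context: Let $\mathbb{F}=\mathbb{F}_q$. A $q$-matroid is $\mathcal{M}=(E,\rho)$, $E$ a finite-dimensional $\mathbb{F}$-vector space, $\rho$ from subspaces to $\mathbb{Z}_{\ge0}$ with $0\le\rho(V)\le\dim V$, monotone and submodular. Closure: $\mathrm{cl}(V)=\sum\{\langle x\rangle:\rho(V+\langle x\rangle)=\rho(V)\}$. Restriction $\mathcal{M}|_X=(X,\rho|_{\mathcal{L}(X)})$. Trivial $q$-matroid: rank identically $0$. $\mathcal{M}=\mathcal{M}_1\oplus\mathcal{M}_2$ means $E=E_1\oplus E_2$ and $\rho(V)=\dim V+\min_{X\le V}(\rho_1(\pi_1(X))+\rho_2(\pi_2(X))-\dim X)$ for all $V$. *)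

theory Defs
  imports Complex_Main
begin

text \<open>A q-matroid (E, rho) has ground space E, a
finite-dimensional subspace; rho is only relevant on subspaces of E.\<close>

definition sumsp :: "'v::ab_group_add set \<Rightarrow> 'v set \<Rightarrow> 'v set" where
  "sumsp V W = {v + w | v w. v \<in> V \<and> w \<in> W}"

definition is_subsp :: "('a::field \<Rightarrow> 'v::ab_group_add \<Rightarrow> 'v) \<Rightarrow> 'v set \<Rightarrow> 'v set \<Rightarrow> bool" where
  "is_subsp scale E V \<longleftrightarrow> module.subspace scale V \<and> V \<subseteq> E"

definition qmatroid :: "('a::field \<Rightarrow> 'v::ab_group_add \<Rightarrow> 'v) \<Rightarrow> 'v set \<Rightarrow> ('v set \<Rightarrow> nat) \<Rightarrow> bool" where
  "qmatroid scale E rho \<longleftrightarrow>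
     vector_space scale \<and> module.subspace scale E \<and>
     (\<exists>B. finite B \<and> B \<subseteq> E \<and> module.span scale B = E) \<and>
     (\<forall>V. is_subsp scale E V \<longrightarrow> rho V \<le> vector_space.dim scale V) \<and>
     (\<forall>V W. is_subsp scale E V \<and> is_subsp scale E W \<and> V \<subseteq> W \<longrightarrow> rho V \<le> rho W) \<and>
     (\<forall>V W. is_subsp scale E V \<and> is_subsp scale E W \<longrightarrow>
        rho (sumsp V W) + rho (V \<inter> W) \<le> rho V + rho W)"

text \<open>Closure: sum of all \<langle>x\<rangle> (x in E) with rho(V + \<langle>x\<rangle>) = rho(V);
  a sum of subspaces is the span of their union.\<close>
definition qcl :: "('a::field \<Rightarrow> 'v::ab_group_add \<Rightarrow> 'v) \<Rightarrow> 'v set \<Rightarrow> ('v set \<Rightarrow> nat) \<Rightarrow> 'v set \<Rightarrow> 'v set" where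
  "qcl scale E rho V =
     module.span scale (\<Union>{module.span scale {x} | x. x \<in> E \<and>
        rho (sumsp V (module.span scale {x})) = rho V})"

text \<open>Restriction M|X = (X, rho restricted to subspaces of X): represented
  by the same rank function, considered on subspaces of X only.\<close>
definition trivial_qmatroid :: "('a::field \<Rightarrow> 'v::ab_group_add \<Rightarrow> 'v) \<Rightarrow> 'v set \<Rightarrow> ('v set \<Rightarrow> nat) \<Rightarrow> bool" where
  "trivial_qmatroid scale E rho \<longleftrightarrow> qmatroid scale E rho \<and> (\<forall>V. is_subsp scale E V \<longrightarrow> rho V = 0)"

definition inner_direct_sum :: "('a::field \<Rightarrow> 'v::ab_group_add \<Rightarrow> 'v) \<Rightarrow> 'v set \<Rightarrow> 'v set \<Rightarrow> 'v set \<Rightarrow> bool" where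
  "inner_direct_sum scale E E1 E2 \<longleftrightarrow>
     is_subsp scale E E1 \<and> is_subsp scale E E2 \<and> E1 \<inter> E2 = {0} \<and> sumsp E1 E2 = E"

definition proj1 :: "'v::ab_group_add set \<Rightarrow> 'v set \<Rightarrow> 'v \<Rightarrow> 'v" where
  "proj1 E1 E2 v = (THE a. a \<in> E1 \<and> v - a \<in> E2)"

definition proj2 :: "'v::ab_group_add set \<Rightarrow> 'v set \<Rightarrow> 'v \<Rightarrow> 'v" where
  "proj2 E1 E2 v = (THE b. b \<in> E2 \<and> v - b \<in> E1)"

definition qdirect_sum ::
  "('a::field \<Rightarrow> 'v::ab_group_add \<Rightarrow> 'v) \<Rightarrow> 'v set \<Rightarrow> ('v set \<Rightarrow> nat) \<Rightarrow>
   'v set \<Rightarrow> ('v set \<Rightarrow> nat) \<Rightarrow> 'v set \<Rightarrow> ('v set \<Rightarrow> nat) \<Rightarrow> bool" where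
  "qdirect_sum scale E rho E1 rho1 E2 rho2 \<longleftrightarrow>
     qmatroid scale E rho \<and> qmatroid scale E1 rho1 \<and> qmatroid scale E2 rho2 \<and>
     inner_direct_sum scale E E1 E2 \<and>
     (\<forall>V. is_subsp scale E V \<longrightarrow>
        int (rho V) = int (vector_space.dim scale V) +
          Min {int (rho1 (proj1 E1 E2 ` X)) + int (rho2 (proj2 E1 E2 ` X))
                 - int (vector_space.dim scale X) | X. is_subsp scale V X})"

end

theory Submission
  imports Defs
begin

text \<open>The loops, i.e. the vectors x with \<open>\<rho>\<langle>x\<rangle> = 0\<close>, form a subspace of rank 0: by
  submodularity a span of finitely many loops has rank 0, so by monotonicity each of its vectors
  is a loop again.  This subspace is \<open>cl(0)\<close>.  Adding a subspace of rank 0 never changes the rank,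
  and \<open>V + E\<^sub>1 = \<pi>\<^sub>2(V) + E\<^sub>1\<close>, so \<open>\<rho>(V) = \<rho>(\<pi>\<^sub>2(V))\<close> and \<open>\<rho>(\<pi>\<^sub>1(X)) = 0\<close>.  The direct sum
  formula then says that \<open>\<rho>(V) - dim V\<close> is the minimum of \<open>\<rho>(X) - dim X\<close> over \<open>X \<le> V\<close>,
  which holds because the rank grows at most as fast as the dimension: for a complement Y of X in V,
  \<open>\<rho>(V) \<le> \<rho>(X) + \<rho>(Y) \<le> \<rho>(X) + dim V - dim X\<close>.\<close>

lemma proj1_eq_proj2_swap: "proj1 E1 E2 = proj2 E2 E1"
  by (simp add: fun_eq_iff proj1_def proj2_def)

lemma sumsp_memI: "v \<in> V \<Longrightarrow> w \<in> W \<Longrightarrow> v + w \<in> sumsp V W"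
  unfolding sumsp_def by blast

lemma sumsp_zero_left: "sumsp {0} V = V"
  unfolding sumsp_def by auto

lemma sumsp_commute: "sumsp V W = sumsp W V"
  unfolding sumsp_def by (auto, metis add.commute, metis add.commute)

lemma inner_direct_sumD:
  assumes "inner_direct_sum scale E F G"
  shows "is_subsp scale E F" "is_subsp scale E G" "F \<inter> G = {0}" "sumsp F G = E"
  using assms by (simp_all add: inner_direct_sum_def)

lemma inner_direct_sum_commute: "inner_direct_sum scale E F G \<longleftrightarrow> inner_direct_sum scale E G F"
  unfolding inner_direct_sum_def by (metis sumsp_commute Int_commute)

context vector_space
begin

lemma sumsp_span: "sumsp (span S) (span T) = span (S \<union> T)"
  by (simp add: sumsp_def span_Un)

lemma subspace_sumsp: "subspace V \<Longrightarrow> subspace W \<Longrightarrow> subspace (sumsp V W)"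
  unfolding sumsp_def by (rule subspace_sums)

lemma sumsp_subset: "subspace E \<Longrightarrow> V \<subseteq> E \<Longrightarrow> W \<subseteq> E \<Longrightarrow> sumsp V W \<subseteq> E"
  unfolding sumsp_def by (auto intro: subspace_add)

lemma subset_sumsp: "subspace W \<Longrightarrow> V \<subseteq> sumsp V W"
  unfolding sumsp_def by (force intro: subspace_0)

lemma proj2_add:
  assumes "subspace E1" "subspace E2" "E1 \<inter> E2 = {0}" "a \<in> E1" "b \<in> E2"
  shows "proj2 E1 E2 (a + b) = b"
  unfolding proj2_def
proof (rule the_equality)
  show "b \<in> E2 \<and> a + b - b \<in> E1"
    using assms by simp
  fix b' assume b': "b' \<in> E2 \<and> a + b - b' \<in> E1"
  have "b - b' \<in> E2"
    using b' assms by (simp add: subspace_diff)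
  moreover have "b - b' = (a + b - b') - a"
    by (simp add: algebra_simps)
  then have "b - b' \<in> E1"
    using b' assms subspace_diff[OF assms(1)] by metis
  ultimately show "b' = b"
    using assms(3) by (metis IntI singletonD right_minus_eq)
qed

lemma proj2_mem:
  assumes "subspace E1" "subspace E2" "E1 \<inter> E2 = {0}" "v \<in> sumsp E1 E2"
  shows "proj2 E1 E2 v \<in> E2" "v - proj2 E1 E2 v \<in> E1"
proof -
  obtain a b where "a \<in> E1" "b \<in> E2" "v = a + b"
    using assms(4) by (auto simp: sumsp_def)
  then show "proj2 E1 E2 v \<in> E2" "v - proj2 E1 E2 v \<in> E1"
    using proj2_add[OF assms(1-3)] by simp_all
qed

lemma image_proj2_eq:
  assumes "subspace E1" "subspace E2" "E1 \<inter> E2 = {0}" "V \<subseteq> sumsp E1 E2"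
  shows "proj2 E1 E2 ` V = sumsp V E1 \<inter> E2"
proof (intro equalityI subsetI)
  fix b assume "b \<in> proj2 E1 E2 ` V"
  then obtain v where v: "v \<in> V" "b = proj2 E1 E2 v"
    by blast
  have "v - b \<in> E1"
    using proj2_mem(2)[OF assms(1-3)] v assms(4) by auto
  then have "- (v - b) \<in> E1"
    by (rule subspace_neg[OF assms(1)])
  then have "v + - (v - b) \<in> sumsp V E1"
    by (rule sumsp_memI[OF v(1)])
  moreover have "b \<in> E2"
    using proj2_mem(1)[OF assms(1-3)] v assms(4) by auto
  ultimately show "b \<in> sumsp V E1 \<inter> E2"
    by simp
next
  fix b assume "b \<in> sumsp V E1 \<inter> E2"
  then obtain v e where ve: "v \<in> V" "e \<in> E1" "b = v + e" "b \<in> E2"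
    by (auto simp: sumsp_def)
  have "v = - e + b"
    using ve(3) by (simp add: algebra_simps)
  moreover have "- e \<in> E1"
    using ve(2) by (rule subspace_neg[OF assms(1)])
  ultimately have "proj2 E1 E2 v = b"
    using proj2_add[OF assms(1-3) _ ve(4)] by metis
  then show "b \<in> proj2 E1 E2 ` V"
    using ve(1) by (metis image_eqI)
qed

lemma sumsp_image_cong:
  assumes "subspace F" "\<And>v. v \<in> V \<Longrightarrow> v - f v \<in> F"
  shows "sumsp (f ` V) F = sumsp V F"
proof (intro equalityI subsetI)
  fix z assume "z \<in> sumsp (f ` V) F"
  then obtain v e where ve: "v \<in> V" "e \<in> F" "z = f v + e"
    by (auto simp: sumsp_def)
  have "z = v + (e - (v - f v))"
    using ve(3) by (simp add: algebra_simps)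
  moreover have "e - (v - f v) \<in> F"
    using assms ve by (simp add: subspace_diff)
  ultimately show "z \<in> sumsp V F"
    using ve(1) sumsp_memI by metis
next
  fix z assume "z \<in> sumsp V F"
  then obtain v e where ve: "v \<in> V" "e \<in> F" "z = v + e"
    by (auto simp: sumsp_def)
  have "z = f v + ((v - f v) + e)"
    using ve(3) by (simp add: algebra_simps)
  moreover have "(v - f v) + e \<in> F"
    using assms ve by (simp add: subspace_add)
  ultimately show "z \<in> sumsp (f ` V) F"
    using ve(1) sumsp_memI by blast
qed

lemma is_subsp_image_proj2:
  assumes "inner_direct_sum scale E F G" "is_subsp scale E V"
  shows "is_subsp scale E (proj2 F G ` V)" "proj2 F G ` V \<subseteq> G"
proof -
  note FG = inner_direct_sumD[OF assms(1)]
  have "proj2 F G ` V = sumsp V F \<inter> G"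
    using FG assms(2) by (intro image_proj2_eq) (auto simp: is_subsp_def)
  then show "is_subsp scale E (proj2 F G ` V)" "proj2 F G ` V \<subseteq> G"
    using FG assms(2) by (auto simp: is_subsp_def intro!: subspace_inter subspace_sumsp)
qed

end

locale q_matroid =
  fixes scale :: "'a::field \<Rightarrow> 'v::ab_group_add \<Rightarrow> 'v"
    and E :: "'v set" and rho :: "'v set \<Rightarrow> nat"
  assumes qmatroid: "qmatroid scale E rho"
begin

sublocale vector_space scale
  using qmatroid by (simp add: qmatroid_def)

lemma subspace_ground: "subspace E"
  using qmatroid by (simp add: qmatroid_def)

lemma finite_spanning_set: "\<exists>B. finite B \<and> B \<subseteq> E \<and> span B = E"
  using qmatroid by (simp add: qmatroid_def)

lemma rank_le_dim: "is_subsp scale E V \<Longrightarrow> rho V \<le> dim V"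
  using qmatroid by (simp add: qmatroid_def)

lemma rank_mono:
  "is_subsp scale E V \<Longrightarrow> is_subsp scale E W \<Longrightarrow> V \<subseteq> W \<Longrightarrow> rho V \<le> rho W"
  using qmatroid by (simp add: qmatroid_def)

lemma rank_submodular:
  "is_subsp scale E V \<Longrightarrow> is_subsp scale E W \<Longrightarrow>
    rho (sumsp V W) + rho (V \<inter> W) \<le> rho V + rho W"
  using qmatroid by (simp add: qmatroid_def)

lemma rank_sumsp_le:
  "is_subsp scale E V \<Longrightarrow> is_subsp scale E W \<Longrightarrow> rho (sumsp V W) \<le> rho V + rho W"
  using rank_submodular by fastforce

lemma is_subsp_span: "B \<subseteq> E \<Longrightarrow> is_subsp scale E (span B)"
  by (simp add: is_subsp_def span_minimal subspace_ground)

lemma is_subsp_sumsp: "is_subsp scale E V \<Longrightarrow> is_subsp scale E W \<Longrightarrow> is_subsp scale E (sumsp V W)"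
  by (simp add: is_subsp_def subspace_sumsp sumsp_subset subspace_ground)

lemma finite_independent: "independent B \<Longrightarrow> B \<subseteq> E \<Longrightarrow> finite B"
  using finite_spanning_set independent_span_bound by metis

lemma subspace_finite_basis:
  assumes "is_subsp scale E F"
  obtains B where "B \<subseteq> F" "independent B" "span B = F" "finite B" "card B = dim F"
proof -
  obtain B where B: "B \<subseteq> F" "independent B" "F \<subseteq> span B"
    using maximal_independent_subset by blast
  moreover have "span B = F"
    using B assms by (simp add: is_subsp_def span_subspace)
  moreover have "finite B"
    using B assms finite_independent by (auto simp: is_subsp_def)
  moreover have "card B = dim F"
    using B basis_card_eq_dim by blast
  ultimately show thesis
    using that by blast
qed

lemma qmatroid_restrict:
  assumes "is_subsp scale E F"
  shows "qmatroid scale F rho"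
proof -
  have sub: "is_subsp scale E V" if "is_subsp scale F V" for V
    using that assms by (auto simp: is_subsp_def)
  obtain B where "finite B" "B \<subseteq> F" "span B = F"
    using subspace_finite_basis[OF assms] by metis
  then show ?thesis
    unfolding qmatroid_def using assms vector_space_axioms
    by (auto simp: is_subsp_def intro: sub rank_le_dim rank_mono rank_submodular)
qed

lemma rank_zero: "rho {0} = 0"
  using rank_le_dim[of "{0}"] dim_span_eq_card_independent[of "{}"]
  by (simp add: is_subsp_def subspace_0 subspace_ground independent_empty)

lemma rank_span_rank_zero:
  assumes "finite B" "B \<subseteq> E" "\<And>x. x \<in> B \<Longrightarrow> rho (span {x}) = 0"
  shows "rho (span B) = 0"
  using assms
proof (induction B rule: finite_induct)
  case empty
  then show ?case
    using rank_zero by simp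
next
  case (insert x B)
  have "span (insert x B) = sumsp (span {x}) (span B)"
    by (simp add: sumsp_span)
  moreover have "is_subsp scale E (span {x})" "is_subsp scale E (span B)"
    using insert.prems(1) by (simp_all add: is_subsp_span)
  ultimately have "rho (span (insert x B)) \<le> rho (span {x}) + rho (span B)"
    using rank_sumsp_le by presburger
  then show ?case
    using insert by simp
qed

definition loops :: "'v set" where
  "loops = {x \<in> E. rho (span {x}) = 0}"

lemma
  shows span_loops: "span loops = loops"
    and rank_loops: "rho loops = 0"
proof -
  have loops_E: "loops \<subseteq> E"
    by (auto simp: loops_def)
  obtain B where B: "B \<subseteq> loops" "independent B" "loops \<subseteq> span B"
    using maximal_independent_subset by blast
  have B_E: "B \<subseteq> E"
    using B(1) loops_E by (rule order_trans)
  have rank_B: "rho (span B) = 0"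
    using finite_independent[OF B(2) B_E] B_E
  proof (rule rank_span_rank_zero)
    show "rho (span {x}) = 0" if "x \<in> B" for x
      using that B(1) by (auto simp: loops_def)
  qed
  have "span B \<subseteq> loops"
  proof
    fix x assume x: "x \<in> span B"
    have x_E: "x \<in> E"
      using x is_subsp_span[OF B_E] by (auto simp: is_subsp_def)
    have "span {x} \<subseteq> span B"
      using x by (simp add: span_minimal)
    then have "rho (span {x}) \<le> rho (span B)"
      using rank_mono is_subsp_span B_E x_E by simp
    then show "x \<in> loops"
      using rank_B x_E by (simp add: loops_def)
  qed
  then have span_B: "span B = loops"
    using B(3) by (rule subset_antisym)
  then show "span loops = loops"
    using span_span by metis
  show "rho loops = 0"
    using rank_B span_B by simp
qed

lemma qcl_zero_eq_loops: "qcl scale E rho {0} = loops"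
proof -
  let ?U = "\<Union>{span {x} | x. x \<in> loops}"
  have qcl_U: "qcl scale E rho {0} = span ?U"
    by (simp add: qcl_def sumsp_zero_left rank_zero loops_def)
  have U_loops: "?U \<subseteq> loops"
  proof
    fix y assume "y \<in> ?U"
    then obtain x where "x \<in> loops" "y \<in> span {x}"
      by blast
    then have "y \<in> span loops"
      using span_mono[of "{x}" loops] by blast
    then show "y \<in> loops"
      using span_loops by simp
  qed
  have "loops \<subseteq> ?U"
    using span_base[of _ "{_}"] by blast
  then have "loops \<subseteq> span ?U"
    using span_superset by (rule order_trans)
  moreover have "span ?U \<subseteq> loops"
    using span_mono[OF U_loops] span_loops by simp
  ultimately show ?thesis
    using qcl_U by simp
qed

lemma rank_sumsp_rank_zero:
  assumes "is_subsp scale E W" "is_subsp scale E F" "rho F = 0"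
  shows "rho (sumsp W F) = rho W"
proof (rule antisym)
  show "rho (sumsp W F) \<le> rho W"
    using rank_sumsp_le assms by fastforce
  show "rho W \<le> rho (sumsp W F)"
    using assms by (intro rank_mono is_subsp_sumsp subset_sumsp) (auto simp: is_subsp_def)
qed

lemma rank_increase_le_dim_increase:
  assumes X: "is_subsp scale E X" and V: "is_subsp scale E V" and "X \<subseteq> V"
  shows "rho V + dim X \<le> rho X + dim V"
proof -
  obtain BX where BX: "BX \<subseteq> X" "independent BX" "span BX = X" "finite BX" "card BX = dim X"
    using subspace_finite_basis[OF X] by metis
  obtain BV where BV: "BX \<subseteq> BV" "BV \<subseteq> V" "independent BV" "V \<subseteq> span BV"
    using maximal_independent_subset_extend[of BX V] BX \<open>X \<subseteq> V\<close> by blast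
  have "finite BV"
    using finite_independent BV V by (auto simp: is_subsp_def)
  have card_BV: "card BV = dim V"
    using basis_card_eq_dim BV(2-4) by blast
  define Y where "Y = span (BV - BX)"
  have dim_Y: "dim Y = dim V - dim X"
    unfolding Y_def using dim_span_eq_card_independent[of "BV - BX"] independent_mono[OF BV(3)]
      card_Diff_subset[OF BX(4) BV(1)] card_BV BX(5) by auto
  have "sumsp X Y = span BV"
    unfolding Y_def BX(3)[symmetric] sumsp_span using BV(1) by (simp add: Un_absorb1)
  also have "\<dots> = V"
    using BV V by (simp add: is_subsp_def span_subspace)
  finally have "sumsp X Y = V" .
  moreover have Y_subsp: "is_subsp scale E Y"
    unfolding Y_def using BV(2) V by (intro is_subsp_span) (auto simp: is_subsp_def)
  ultimately have "rho V \<le> rho X + rho Y"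
    using rank_sumsp_le X by blast
  moreover have "rho Y \<le> dim Y"
    using rank_le_dim Y_subsp by blast
  moreover have "dim X \<le> dim V"
    using card_mono[OF \<open>finite BV\<close> BV(1)] card_BV BX(5) by simp
  ultimately show ?thesis
    using dim_Y by linarith
qed

lemma Min_rank_minus_dim:
  assumes V: "is_subsp scale E V"
  shows "Min {int (rho X) - int (dim X) | X. is_subsp scale V X} = int (rho V) - int (dim V)"
proof -
  let ?S = "{int (rho X) - int (dim X) | X. is_subsp scale V X}"
  have X_E: "is_subsp scale E X" if "is_subsp scale V X" for X
    using that V by (auto simp: is_subsp_def)
  have lower: "int (rho V) - int (dim V) \<le> y" and upper: "y \<le> 0" if "y \<in> ?S" for y
  proof -
    obtain X where X: "is_subsp scale V X" "y = int (rho X) - int (dim X)"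
      using \<open>y \<in> ?S\<close> by blast
    then show "int (rho V) - int (dim V) \<le> y"
      using rank_increase_le_dim_increase[OF X_E[OF X(1)] V] by (auto simp: is_subsp_def)
    show "y \<le> 0"
      using X rank_le_dim[OF X_E[OF X(1)]] by simp
  qed
  have "?S \<subseteq> {int (rho V) - int (dim V)..0}"
    using lower upper atLeastAtMost_iff by blast
  then have "finite ?S"
    by (rule finite_subset) simp
  moreover have "int (rho V) - int (dim V) \<in> ?S"
    using V by (auto simp: is_subsp_def)
  ultimately show ?thesis
    by (intro Min_eqI lower)
qed

context
  fixes F G :: "'v set"
  assumes decomp: "inner_direct_sum scale E F G" and rank_F: "rho F = 0"
begin

lemma rank_image_proj2:
  assumes V: "is_subsp scale E V"
  shows "rho (proj2 F G ` V) = rho V"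
proof -
  note FG = inner_direct_sumD[OF decomp]
  have "sumsp (proj2 F G ` V) F = sumsp V F"
  proof (rule sumsp_image_cong)
    show "subspace F"
      using FG by (simp add: is_subsp_def)
    show "v - proj2 F G v \<in> F" if "v \<in> V" for v
      using proj2_mem(2) FG that V by (auto simp: is_subsp_def)
  qed
  then show ?thesis
    using rank_sumsp_rank_zero[OF _ FG(1) rank_F] is_subsp_image_proj2[OF decomp V] V by metis
qed

lemma rank_image_proj1:
  assumes V: "is_subsp scale E V"
  shows "rho (proj1 F G ` V) = 0"
proof -
  have "inner_direct_sum scale E G F"
    using decomp inner_direct_sum_commute by blast
  then have "is_subsp scale E (proj1 F G ` V)" "proj1 F G ` V \<subseteq> F"
    unfolding proj1_eq_proj2_swap using V by (rule is_subsp_image_proj2)+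
  then show ?thesis
    using rank_mono[OF _ inner_direct_sumD(1)[OF decomp]] rank_F by fastforce
qed

lemma trivial_qmatroid_summand: "trivial_qmatroid scale F rho"
  unfolding trivial_qmatroid_def
proof (intro conjI allI impI)
  have F: "is_subsp scale E F"
    using inner_direct_sumD(1)[OF decomp] .
  then show "qmatroid scale F rho"
    by (rule qmatroid_restrict)
  fix V assume "is_subsp scale F V"
  then have "rho V \<le> rho F"
    using F by (intro rank_mono) (auto simp: is_subsp_def)
  then show "rho V = 0"
    using rank_F by simp
qed

lemma qdirect_sum_summands: "qdirect_sum scale E rho F rho G rho"
  unfolding qdirect_sum_def
proof (intro conjI allI impI)
  show "qmatroid scale F rho" "qmatroid scale G rho"
    using qmatroid_restrict inner_direct_sumD(1,2)[OF decomp] by simp_all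
  fix V assume V: "is_subsp scale E V"
  have X_E: "is_subsp scale E X" if "is_subsp scale V X" for X
    using that V by (auto simp: is_subsp_def)
  have "{int (rho (proj1 F G ` X)) + int (rho (proj2 F G ` X)) - int (dim X) | X. is_subsp scale V X}
      = {int (rho X) - int (dim X) | X. is_subsp scale V X}"
    unfolding setcompr_eq_image
    using rank_image_proj1[OF X_E] rank_image_proj2[OF X_E] by (intro image_cong) auto
  then show "int (rho V) = int (dim V) +
      Min {int (rho (proj1 F G ` X)) + int (rho (proj2 F G ` X)) - int (dim X) | X. is_subsp scale V X}"
    using Min_rank_minus_dim[OF V] by simp
qed (use qmatroid decomp in simp_all)

end

end

theorem proposition7p6:
  fixes scale :: "'a::{field,finite} \<Rightarrow> 'v::ab_group_add \<Rightarrow> 'v"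
    and E E1 E2 :: "'v set" and rho :: "'v set \<Rightarrow> nat"
  assumes "qmatroid scale E rho"
    and "E1 = qcl scale E rho {0}"
    and "inner_direct_sum scale E E1 E2"
  shows "trivial_qmatroid scale E1 rho
       \<and> (\<forall>V. is_subsp scale E V \<longrightarrow> rho V = rho (proj2 E1 E2 ` V))
       \<and> qdirect_sum scale E rho E1 rho E2 rho
       \<and> qcl scale E rho {0} = {x \<in> E. rho (module.span scale {x}) = 0}"
proof -
  interpret q_matroid scale E rho
    by (rule q_matroid.intro) fact
  have "E1 = loops"
    using assms(2) qcl_zero_eq_loops by simp
  then have rank_E1: "rho E1 = 0"
    using rank_loops by simp
  show ?thesis
    using trivial_qmatroid_summand[OF assms(3) rank_E1] rank_image_proj2[OF assms(3) rank_E1]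
      qdirect_sum_summands[OF assms(3) rank_E1] qcl_zero_eq_loops
    by (simp add: loops_def)
qed

end
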